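(* For any tree $T$, $\gamma_{oidR}(T)\ge 2\beta(T)+1$, and this bound is tight (there are trees attaining equality).
   Context: $\beta(T)$ is the vertex cover number of $T$. A DRD function of $G$ is $f:V(G)\to\{0,1,2,3\}$ such that every vertex with value $0$ has a neighbor with value $3$ or two neighbors with value $2$, and every vertex with value $1$ has a neighbor with value at least $2$; it is an OIDRD function if the set of vertices with value $0$ is independent, and $\gamma_{oidR}(G)$ is the minimum weight $\sum_v f(v)$ of an OIDRD function. *)

theory Defs
  imports Main
begin

definition is_graph :: "'a set \<Rightarrow> ('a \<Rightarrow> 'a \<Rightarrow> bool) \<Rightarrow> bool" where
  "is_graph V E \<longleftrightarrow> finite V \<and>
     (\<forall>u v. E u v \<longrightarrow> u \<in> V \<and> v \<in> V \<and> u \<noteq> v \<and> E v u)"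

definition connected_graph :: "'a set \<Rightarrow> ('a \<Rightarrow> 'a \<Rightarrow> bool) \<Rightarrow> bool" where
  "connected_graph V E \<longleftrightarrow> (\<forall>u\<in>V. \<forall>v\<in>V. E\<^sup>*\<^sup>* u v)"

definition has_cycle :: "'a set \<Rightarrow> ('a \<Rightarrow> 'a \<Rightarrow> bool) \<Rightarrow> bool" where
  "has_cycle V E \<longleftrightarrow> (\<exists>cs. length cs \<ge> 3 \<and> distinct cs \<and> set cs \<subseteq> V \<and>
     (\<forall>i. Suc i < length cs \<longrightarrow> E (cs ! i) (cs ! Suc i)) \<and> E (last cs) (hd cs))"

definition is_tree :: "'a set \<Rightarrow> ('a \<Rightarrow> 'a \<Rightarrow> bool) \<Rightarrow> bool" where
  "is_tree V E \<longleftrightarrow> is_graph V E \<and> V \<noteq> {} \<and> connected_graph V E \<and> \<not> has_cycle V E"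

definition vertex_cover :: "'a set \<Rightarrow> ('a \<Rightarrow> 'a \<Rightarrow> bool) \<Rightarrow> 'a set \<Rightarrow> bool" where
  "vertex_cover V E S \<longleftrightarrow> S \<subseteq> V \<and> (\<forall>u v. E u v \<longrightarrow> u \<in> S \<or> v \<in> S)"

definition beta :: "'a set \<Rightarrow> ('a \<Rightarrow> 'a \<Rightarrow> bool) \<Rightarrow> nat" where
  "beta V E = (LEAST k. \<exists>S. vertex_cover V E S \<and> card S = k)"

definition DRD :: "'a set \<Rightarrow> ('a \<Rightarrow> 'a \<Rightarrow> bool) \<Rightarrow> ('a \<Rightarrow> nat) \<Rightarrow> bool" where
  "DRD V E f \<longleftrightarrow> (\<forall>v\<in>V. f v \<le> 3) \<and>
     (\<forall>v\<in>V. f v = 0 \<longrightarrow> (\<exists>u. E v u \<and> f u = 3) \<or>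
                         (\<exists>u w. u \<noteq> w \<and> E v u \<and> E v w \<and> f u = 2 \<and> f w = 2)) \<and>
     (\<forall>v\<in>V. f v = 1 \<longrightarrow> (\<exists>u. E v u \<and> f u \<ge> 2))"

definition OIDRD :: "'a set \<Rightarrow> ('a \<Rightarrow> 'a \<Rightarrow> bool) \<Rightarrow> ('a \<Rightarrow> nat) \<Rightarrow> bool" where
  "OIDRD V E f \<longleftrightarrow> DRD V E f \<and>
     (\<forall>u\<in>V. \<forall>v\<in>V. f u = 0 \<and> f v = 0 \<longrightarrow> \<not> E u v)"

definition gamma_oidR :: "'a set \<Rightarrow> ('a \<Rightarrow> 'a \<Rightarrow> bool) \<Rightarrow> nat" where
  "gamma_oidR V E = (LEAST w. \<exists>f. OIDRD V E f \<and> (\<Sum>v\<in>V. f v) = w)"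

end

theory Submission
  imports Defs
begin

text \<open>Let \<open>f\<close> be an OIDRD function of a forest. We strengthen the claim for induction: a set
  \<open>D\<close> of vertices may violate the domination condition, at the price of one extra unit of weight
  each, and still some vertex cover \<open>S\<close> satisfies \<open>2 |S| + 1 \<le> w(f) + |D|\<close>. By a longest path
  argument a forest has an isolated vertex, which is simply deleted, or a support vertex \<open>u\<close>
  all of whose neighbours but at most one, \<open>p\<close>, are leaves. Then \<open>u\<close> goes into the cover and
  \<open>u\<close> with its leaves is deleted: the zeros being independent, the deleted weight (with charges)
  is at least 2, and at least 3 if \<open>u\<close> might have dominated \<open>p\<close>, in which case \<open>p\<close> joins \<open>D\<close>.\<close>

definition is_path :: "'a set \<Rightarrow> ('a \<Rightarrow> 'a \<Rightarrow> bool) \<Rightarrow> 'a list \<Rightarrow> bool" where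
  "is_path V E xs \<longleftrightarrow> xs \<noteq> [] \<and> distinct xs \<and> set xs \<subseteq> V \<and>
     (\<forall>i. Suc i < length xs \<longrightarrow> E (xs ! i) (xs ! Suc i))"

definition leaf_at :: "('a \<Rightarrow> 'a \<Rightarrow> bool) \<Rightarrow> 'a \<Rightarrow> 'a \<Rightarrow> bool" where
  "leaf_at E u x \<longleftrightarrow> E u x \<and> (\<forall>y. E x y \<longrightarrow> y = u)"

definition induced :: "('a \<Rightarrow> 'a \<Rightarrow> bool) \<Rightarrow> 'a set \<Rightarrow> 'a \<Rightarrow> 'a \<Rightarrow> bool" where
  "induced E A a b \<longleftrightarrow> E a b \<and> a \<in> A \<and> b \<in> A"

lemma is_graph_induced:
  assumes "is_graph V E" "A \<subseteq> V"
  shows "is_graph A (induced E A)"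
  using assms by (auto simp: is_graph_def induced_def intro: finite_subset)

lemma has_cycle_mono:
  assumes "has_cycle A E'" "A \<subseteq> V" "\<And>a b. E' a b \<Longrightarrow> E a b"
  shows "has_cycle V E"
  using assms unfolding has_cycle_def by (meson order_trans)

subsection \<open>Longest paths in forests\<close>

lemma longest_path_exists:
  assumes "finite V" "V \<noteq> {}"
  obtains P where "is_path V E P" "\<And>Q. is_path V E Q \<Longrightarrow> length Q \<le> length P"
proof -
  obtain x where "x \<in> V" using assms by auto
  then have "is_path V E [x]" by (simp add: is_path_def)
  moreover have "length Q < Suc (card V)" if "is_path V E Q" for Q
  proof -
    have "distinct Q" "set Q \<subseteq> V" using that by (simp_all add: is_path_def)
    then show ?thesis by (metis card_mono[OF assms(1)] distinct_card le_imp_less_Suc)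
  qed
  ultimately show ?thesis
    using Lattices_Big.ex_has_greatest_nat[of "is_path V E" "[x]" length "Suc (card V)"] that
    by blast
qed

lemma is_path_Cons:
  assumes "is_graph V E" "is_path V E P" "x \<notin> set P" "E x (hd P)"
  shows "is_path V E (x # P)"
  using assms unfolding is_path_def is_graph_def
  by (auto simp: nth_Cons hd_conv_nth split: nat.splits)

lemma is_path_tl:
  assumes "is_path V E P" "2 \<le> length P"
  shows "is_path V E (tl P)"
proof -
  have "tl P \<noteq> []" "set (tl P) \<subseteq> set P" using assms(2) by (cases P; auto)+
  then show ?thesis using assms(1) by (auto simp: is_path_def nth_tl distinct_tl)
qed

lemma has_cycle_if_path_chord:
  assumes "is_graph V E" "is_path V E P" "2 \<le> i" "i < length P" "E (P ! 0) (P ! i)"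
  shows "has_cycle V E"
  unfolding has_cycle_def
proof (intro exI conjI)
  let ?C = "take (Suc i) P"
  show "3 \<le> length ?C" "distinct ?C" "set ?C \<subseteq> V"
    "\<forall>j. Suc j < length ?C \<longrightarrow> E (?C ! j) (?C ! Suc j)"
    using assms(2-4) set_take_subset[of "Suc i" P] by (auto simp: is_path_def)
  have "last ?C = P ! i"
    using assms(4) by (subst last_conv_nth) (auto simp: min_def intro: arg_cong[where f="(!) P"])
  moreover have "hd ?C = P ! 0" using assms(4) by (cases P) auto
  ultimately show "E (last ?C) (hd ?C)"
    using assms(1,5) by (simp add: is_graph_def)
qed

lemma longest_path_start_is_leaf:
  assumes graph: "is_graph V E" and acyclic: "\<not> has_cycle V E" and P: "is_path V E P"
    and longest: "\<And>Q. is_path V E Q \<Longrightarrow> length Q \<le> length P"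
    and "2 \<le> length P" "E (P ! 0) y"
  shows "y = P ! 1"
proof (rule ccontr)
  assume "y \<noteq> P ! 1"
  show False
  proof (cases "y \<in> set P")
    case True
    then obtain i where i: "i < length P" "y = P ! i" by (metis in_set_conv_nth)
    with \<open>y \<noteq> P ! 1\<close> \<open>E (P ! 0) y\<close> graph have "2 \<le> i"
      by (metis One_nat_def is_graph_def less_2_cases not_le)
    then show False
      using has_cycle_if_path_chord[OF graph P _ i(1)] i \<open>E (P ! 0) y\<close> acyclic by auto
  next
    case False
    have "E y (hd P)"
      using \<open>E (P ! 0) y\<close> P graph by (auto simp: is_graph_def is_path_def hd_conv_nth)
    then have "is_path V E (y # P)" using is_path_Cons[OF graph P False] by blast
    then show False using longest by fastforce
  qed
qed

text \<open>Take the second vertex of a longest path.\<close>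

lemma forest_isolated_or_support_vertex:
  assumes graph: "is_graph V E" and acyclic: "\<not> has_cycle V E" and "V \<noteq> {}"
  obtains u where "u \<in> V" "\<And>x. \<not> E u x"
  | u l p where "leaf_at E u l" "\<And>x. E u x \<Longrightarrow> x = p \<or> leaf_at E u x"
proof -
  have "finite V" using graph by (simp add: is_graph_def)
  then obtain P where P: "is_path V E P" and longest: "\<And>Q. is_path V E Q \<Longrightarrow> length Q \<le> length P"
    using longest_path_exists \<open>V \<noteq> {}\<close> by blast
  show ?thesis
  proof (cases "length P = 1")
    case True
    have "\<not> E (hd P) x" for x
    proof
      assume "E (hd P) x"
      then have "is_path V E [x, hd P]"
        using P graph by (auto simp: is_path_def is_graph_def nth_Cons split: nat.splits)
      then show False using longest[of "[x, hd P]"] True by simp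
    qed
    moreover have "hd P \<in> V" using P by (auto simp: is_path_def)
    ultimately show ?thesis using that(1) by blast
  next
    case False
    moreover have "P \<noteq> []" using P by (simp add: is_path_def)
    ultimately have len: "2 \<le> length P" by (metis One_nat_def length_0_conv less_2_cases not_le)
    let ?u = "P ! 1"
    have start_leaf: "E (P ! 0) y \<Longrightarrow> y = ?u" for y
      using longest_path_start_is_leaf[OF graph acyclic P longest len] .
    have "E (P ! 0) ?u" using P len unfolding is_path_def by (metis One_nat_def Suc_1 Suc_le_lessD)
    then have "leaf_at E ?u (P ! 0)"
      using graph start_leaf unfolding leaf_at_def is_graph_def by blast
    moreover have "x = P ! 2 \<or> leaf_at E ?u x" if "E ?u x" for x
    proof (cases "x \<in> set P")
      case True
      then obtain i where i: "i < length P" "x = P ! i" by (metis in_set_conv_nth)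
      consider "i = 0" | "i = 1" | "i = 2" | "3 \<le> i" by linarith
      then show ?thesis
      proof cases
        case 1
        then show ?thesis using \<open>leaf_at E ?u (P ! 0)\<close> i by simp
      next
        case 2
        then show ?thesis using \<open>E ?u x\<close> graph i by (metis is_graph_def)
      next
        case 4
        have "has_cycle V E"
          using has_cycle_if_path_chord[OF graph is_path_tl[OF P len], of "i - 1"] 4 i \<open>E ?u x\<close>
          by (simp add: nth_tl)
        then show ?thesis using acyclic by simp
      qed (use i in simp)
    next
      case False
      let ?Q = "x # tl P"
      have "hd (tl P) = ?u" using len by (cases P; cases "tl P") auto
      then have "E x (hd (tl P))" using \<open>E ?u x\<close> graph by (simp add: is_graph_def)
      moreover have "x \<notin> set (tl P)" using False by (cases P) auto
      ultimately have Q: "is_path V E ?Q" using is_path_Cons[OF graph is_path_tl[OF P len]] by blast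
      have "length ?Q = length P" using len by simp
      then have "E (?Q ! 0) y \<Longrightarrow> y = ?Q ! 1" for y
        using longest_path_start_is_leaf[OF graph acyclic Q] longest len by simp
      then have "E x y \<Longrightarrow> y = ?u" for y using len by (simp add: nth_tl)
      then show ?thesis using \<open>E ?u x\<close> by (simp add: leaf_at_def)
    qed
    ultimately show ?thesis using that(2) by blast
  qed
qed

subsection \<open>Double Roman domination with exempt vertices\<close>

definition drd_at :: "('a \<Rightarrow> 'a \<Rightarrow> bool) \<Rightarrow> ('a \<Rightarrow> nat) \<Rightarrow> 'a \<Rightarrow> bool" where
  "drd_at E f v \<longleftrightarrow>
     (f v = 0 \<longrightarrow> (\<exists>u. E v u \<and> f u = 3) \<or> (\<exists>u w. u \<noteq> w \<and> E v u \<and> E v w \<and> f u = 2 \<and> f w = 2)) \<and>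
     (f v = 1 \<longrightarrow> (\<exists>u. E v u \<and> 2 \<le> f u))"

definition OIDRD_except :: "'a set \<Rightarrow> ('a \<Rightarrow> 'a \<Rightarrow> bool) \<Rightarrow> 'a set \<Rightarrow> ('a \<Rightarrow> nat) \<Rightarrow> bool" where
  "OIDRD_except V E D f \<longleftrightarrow>
     (\<forall>a\<in>V. \<forall>b\<in>V. f a = 0 \<and> f b = 0 \<longrightarrow> \<not> E a b) \<and> (\<forall>v\<in>V - D. drd_at E f v)"

definition charged_weight :: "('a \<Rightarrow> nat) \<Rightarrow> 'a set \<Rightarrow> 'a set \<Rightarrow> nat" where
  "charged_weight f D A = (\<Sum>x\<in>A. f x + (if x \<in> D then 1 else 0))"

definition cover_bound :: "'a set \<Rightarrow> ('a \<Rightarrow> 'a \<Rightarrow> bool) \<Rightarrow> 'a set \<Rightarrow> ('a \<Rightarrow> nat) \<Rightarrow> bool" where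
  "cover_bound V E D f \<longleftrightarrow> (\<exists>S. vertex_cover V E S \<and> 2 * card S + 1 \<le> charged_weight f D V)"

lemma OIDRD_imp_OIDRD_except: "OIDRD V E f \<Longrightarrow> OIDRD_except V E {} f"
  by (auto simp: OIDRD_def DRD_def OIDRD_except_def drd_at_def)

lemma drd_at_mono:
  assumes "drd_at E f v" "\<And>x. E v x \<Longrightarrow> 2 \<le> f x \<Longrightarrow> E' v x"
  shows "drd_at E' f v"
proof -
  have "E' v x" if "E v x" "f x = 2 \<or> f x = 3" for x
    using assms(2) that by auto
  then show ?thesis using assms unfolding drd_at_def by blast
qed

lemma drd_at_isolated: "drd_at E f u \<Longrightarrow> (\<And>x. \<not> E u x) \<Longrightarrow> 2 \<le> f u"
  unfolding drd_at_def by (metis One_nat_def less_2_cases not_le)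

lemma drd_at_closed_neighbourhood:
  assumes drd: "drd_at E f u" and "f u \<le> 1" "\<not> E u u" "finite R" "u \<in> R"
    and nbhd: "\<And>x. E u x \<Longrightarrow> x \<in> R"
  shows "3 \<le> sum f R"
proof -
  have pair: "f u + f x \<le> sum f R" if "E u x" for x
    using sum_mono2[OF \<open>finite R\<close>, of "{u, x}" f] that assms(3,5) nbhd by (cases "x = u") auto
  have triple: "f u + f x + f y \<le> sum f R" if "E u x" "E u y" "x \<noteq> y" for x y
    using sum_mono2[OF \<open>finite R\<close>, of "{u, x, y}" f] that assms(3,5) nbhd
    by (cases "x = u \<or> y = u") auto
  consider "f u = 1" | "f u = 0" using \<open>f u \<le> 1\<close> by linarith
  then show ?thesis
  proof cases
    case 1
    then obtain x where "E u x" "2 \<le> f x" using drd by (auto simp: drd_at_def)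
    then show ?thesis using pair[of x] 1 by linarith
  next
    case 2
    then have "(\<exists>x. E u x \<and> f x = 3) \<or> (\<exists>x y. x \<noteq> y \<and> E u x \<and> E u y \<and> f x = 2 \<and> f y = 2)"
      using drd by (simp add: drd_at_def)
    then show ?thesis using pair triple by fastforce
  qed
qed

lemma OIDRD_except_induced:
  assumes OIDRD: "OIDRD_except V E D f" and "A \<subseteq> V" "D \<subseteq> D'"
    and closed: "\<And>v x. v \<in> A - D' \<Longrightarrow> E v x \<Longrightarrow> 2 \<le> f x \<Longrightarrow> x \<in> A"
  shows "OIDRD_except A (induced E A) D' f"
  unfolding OIDRD_except_def
proof (intro conjI)
  show "\<forall>a\<in>A. \<forall>b\<in>A. f a = 0 \<and> f b = 0 \<longrightarrow> \<not> induced E A a b"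
    using OIDRD \<open>A \<subseteq> V\<close> by (auto simp: OIDRD_except_def induced_def)
  show "\<forall>v\<in>A - D'. drd_at (induced E A) f v"
  proof
    fix v assume v: "v \<in> A - D'"
    then have "drd_at E f v" using assms(1-3) by (auto simp: OIDRD_except_def)
    then show "drd_at (induced E A) f v"
      by (rule drd_at_mono) (use v closed in \<open>auto simp: induced_def\<close>)
  qed
qed

lemma vertex_cover_induced_Un:
  assumes "vertex_cover A (induced E A) S" "A \<subseteq> V" "X \<subseteq> V"
    and "\<And>a b. E a b \<Longrightarrow> a \<in> X \<or> b \<in> X \<or> (a \<in> A \<and> b \<in> A)"
  shows "vertex_cover V E (S \<union> X)"
  using assms unfolding vertex_cover_def induced_def by blast

lemma charged_weight_mono: "finite B \<Longrightarrow> A \<subseteq> B \<Longrightarrow> charged_weight f D A \<le> charged_weight f D B"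
  unfolding charged_weight_def by (rule sum_mono2) auto

lemma charged_weight_split:
  "finite V \<Longrightarrow> R \<subseteq> V \<Longrightarrow> charged_weight f D V = charged_weight f D (V - R) + charged_weight f D R"
  unfolding charged_weight_def by (rule sum.subset_diff)

lemma charged_weight_insert_le: "charged_weight f (insert p D) A \<le> charged_weight f D A + 1"
proof (cases "finite A")
  case True
  have "charged_weight f (insert p D) A
      \<le> (\<Sum>x\<in>A. (f x + (if x \<in> D then 1 else 0)) + (if x = p then 1 else 0))"
    unfolding charged_weight_def by (intro sum_mono) auto
  also have "\<dots> = charged_weight f D A + (if p \<in> A then 1 else 0)"
    using True by (simp add: sum.distrib charged_weight_def)
  finally show ?thesis by (auto split: if_splits)
qed (simp add: charged_weight_def)

subsection \<open>Deleting an isolated vertex or a leaf star\<close>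

lemma cover_bound_singleton:
  assumes "is_graph {u} E" "OIDRD_except {u} E D f" "\<And>x. \<not> E u x"
  shows "cover_bound {u} E D f"
proof -
  have "vertex_cover {u} E {}"
    using assms(1,3) by (auto simp: vertex_cover_def is_graph_def)
  moreover have "1 \<le> f u + (if u \<in> D then 1 else 0)"
    using assms(2,3) drd_at_isolated[of E f u] by (auto simp: OIDRD_except_def)
  ultimately show ?thesis by (auto simp: cover_bound_def charged_weight_def)
qed

lemma OIDRD_except_remove_isolated:
  assumes "is_graph V E" "OIDRD_except V E D f" "\<And>x. \<not> E u x"
  shows "OIDRD_except (V - {u}) (induced E (V - {u})) D f"
  using assms by (intro OIDRD_except_induced) (auto simp: is_graph_def)

lemma cover_bound_remove_isolated:
  assumes graph: "is_graph V E" and "\<And>x. \<not> E u x"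
    and "cover_bound (V - {u}) (induced E (V - {u})) D f"
  shows "cover_bound V E D f"
proof -
  obtain S where S: "vertex_cover (V - {u}) (induced E (V - {u})) S"
    and bound: "2 * card S + 1 \<le> charged_weight f D (V - {u})"
    using assms(3) by (auto simp: cover_bound_def)
  have "vertex_cover V E (S \<union> {})"
    using assms(1,2) by (intro vertex_cover_induced_Un[OF S]) (auto simp: is_graph_def)
  moreover have "charged_weight f D (V - {u}) \<le> charged_weight f D V"
    using graph by (intro charged_weight_mono) (auto simp: is_graph_def)
  ultimately show ?thesis using bound by (auto simp: cover_bound_def)
qed

definition leaf_star :: "('a \<Rightarrow> 'a \<Rightarrow> bool) \<Rightarrow> 'a \<Rightarrow> 'a set" where
  "leaf_star E u = insert u {x. leaf_at E u x}"

locale support_vertex =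
  fixes V :: "'a set" and E :: "'a \<Rightarrow> 'a \<Rightarrow> bool" and D :: "'a set" and f :: "'a \<Rightarrow> nat"
    and u l p :: 'a
  assumes graph: "is_graph V E"
    and OIDRD: "OIDRD_except V E D f"
    and leaf: "leaf_at E u l"
    and neighbours: "\<And>x. E u x \<Longrightarrow> x = p \<or> leaf_at E u x"
begin

abbreviation "R \<equiv> leaf_star E u"

abbreviation "charge \<equiv> charged_weight f D R"

text \<open>The only vertex outside \<open>R\<close> that can lose a dominator is \<open>p\<close>, and only if
  \<open>2 \<le> f u\<close>, which forces \<open>3 \<le> charge\<close>; so \<open>p\<close> is exempted only when the deleted weight
  pays for it.\<close>

definition rest_exempt :: "'a set" where
  "rest_exempt = (if 3 \<le> charge then insert p D else D)"

lemma edgeD: "E a b \<Longrightarrow> a \<in> V \<and> b \<in> V \<and> a \<noteq> b \<and> E b a"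
  using graph by (simp add: is_graph_def)

lemma star_subset: "R \<subseteq> V"
  using leaf edgeD by (auto simp: leaf_star_def leaf_at_def)

lemma finite_star: "finite R"
  using star_subset graph finite_subset by (auto simp: is_graph_def)

lemma star_edge: "E a b \<Longrightarrow> a \<in> R \<Longrightarrow> a = u \<or> b = u"
  by (auto simp: leaf_star_def leaf_at_def)

lemma leaf_charge:
  shows "2 \<le> f u + f l + (if l \<in> D then 1 else 0)"
    and "2 \<le> f u \<Longrightarrow> 3 \<le> f u + f l + (if l \<in> D then 1 else 0)"
proof -
  have "E u l" "u \<in> V" "l \<in> V" using leaf edgeD by (auto simp: leaf_at_def)
  then have "f u = 0 \<Longrightarrow> f l \<noteq> 0" using OIDRD by (auto simp: OIDRD_except_def)
  moreover have "(f l = 0 \<longrightarrow> f u = 3) \<and> (f l = 1 \<longrightarrow> 2 \<le> f u)" if "l \<notin> D"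
  proof -
    have "drd_at E f l" using OIDRD \<open>l \<in> V\<close> that by (auto simp: OIDRD_except_def)
    then show ?thesis using leaf by (auto simp: drd_at_def leaf_at_def)
  qed
  ultimately show "2 \<le> f u + f l + (if l \<in> D then 1 else 0)"
    and "2 \<le> f u \<Longrightarrow> 3 \<le> f u + f l + (if l \<in> D then 1 else 0)"
    by (cases "l \<in> D"; fastforce)+
qed

lemma pair_le_charge:
  "f u + (if u \<in> D then 1 else 0) + (f l + (if l \<in> D then 1 else 0)) \<le> charge"
proof -
  have "u \<noteq> l" using leaf edgeD by (auto simp: leaf_at_def)
  moreover have "{u, l} \<subseteq> R" using leaf by (auto simp: leaf_star_def)
  ultimately show ?thesis
    using charged_weight_mono[OF finite_star, of "{u, l}" f D] by (simp add: charged_weight_def)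
qed

lemma charge_ge_2: "2 \<le> charge"
  using pair_le_charge leaf_charge(1) by linarith

lemma charge_ge_3: "2 \<le> f u \<Longrightarrow> 3 \<le> charge"
  using pair_le_charge leaf_charge(2) by linarith

lemma charge_ge_3_if_rest_empty:
  assumes "V - R = {}"
  shows "3 \<le> charge"
proof -
  consider "2 \<le> f u" | "u \<in> D" | "u \<notin> D" "f u \<le> 1" by linarith
  then show ?thesis
  proof cases
    case 3
    have "u \<in> V" using star_subset by (auto simp: leaf_star_def)
    then have "drd_at E f u" using OIDRD 3 by (auto simp: OIDRD_except_def)
    moreover have "\<not> E u u" using edgeD by blast
    moreover have "u \<in> R" by (simp add: leaf_star_def)
    moreover have "x \<in> R" if "E u x" for x using assms edgeD[OF that] by blast
    ultimately have "3 \<le> sum f R"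
      using drd_at_closed_neighbourhood[of E f u R] finite_star 3(2) by blast
    also have "\<dots> \<le> charge" unfolding charged_weight_def by (intro sum_mono) simp
    finally show ?thesis .
  qed (use charge_ge_3 pair_le_charge leaf_charge(1) in auto)
qed

lemma rest_OIDRD_except: "OIDRD_except (V - R) (induced E (V - R)) rest_exempt f"
proof (rule OIDRD_except_induced[OF OIDRD])
  fix v x assume v: "v \<in> V - R - rest_exempt" and "E v x" "2 \<le> f x"
  show "x \<in> V - R"
  proof (rule ccontr)
    assume "x \<notin> V - R"
    then have "x \<in> R" using edgeD[OF \<open>E v x\<close>] by blast
    moreover have "v \<noteq> u" using v by (auto simp: leaf_star_def)
    ultimately have "x = u" using star_edge edgeD[OF \<open>E v x\<close>] by blast
    then have "v = p" using neighbours edgeD[OF \<open>E v x\<close>] v by (auto simp: leaf_star_def)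
    then have "charge < 3" using v by (auto simp: rest_exempt_def split: if_splits)
    then show False using charge_ge_3 \<open>2 \<le> f x\<close> unfolding \<open>x = u\<close> by linarith
  qed
qed (auto simp: rest_exempt_def)

lemma vertex_cover_insert_support:
  assumes "vertex_cover (V - R) (induced E (V - R)) S"
  shows "vertex_cover V E (S \<union> {u})"
proof (rule vertex_cover_induced_Un[OF assms])
  show "V - R \<subseteq> V" by blast
  show "{u} \<subseteq> V" using star_subset by (auto simp: leaf_star_def)
  fix a b assume "E a b"
  then show "a \<in> {u} \<or> b \<in> {u} \<or> a \<in> V - R \<and> b \<in> V - R"
    using star_edge[of a b] star_edge[of b a] edgeD[of a b] by blast
qed

lemma cover_bound_if_rest_empty: "V - R = {} \<Longrightarrow> cover_bound V E D f"
  using vertex_cover_insert_support[of "{}"] charge_ge_3_if_rest_empty star_subset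
  by (auto simp: cover_bound_def vertex_cover_def induced_def intro!: exI[of _ "{u}"])

lemma cover_bound_from_rest:
  assumes "cover_bound (V - R) (induced E (V - R)) rest_exempt f"
  shows "cover_bound V E D f"
proof -
  obtain S where S: "vertex_cover (V - R) (induced E (V - R)) S"
    and bound: "2 * card S + 1 \<le> charged_weight f rest_exempt (V - R)"
    using assms by (auto simp: cover_bound_def)
  have "finite S" using S graph finite_subset by (auto simp: vertex_cover_def is_graph_def)
  then have "card (S \<union> {u}) \<le> card S + 1" by (simp add: card_insert_if)
  moreover have "charged_weight f rest_exempt (V - R)
      \<le> charged_weight f D (V - R) + (if 3 \<le> charge then 1 else 0)"
    using charged_weight_insert_le[of f p D "V - R"] by (simp add: rest_exempt_def)
  moreover have "charged_weight f D V = charged_weight f D (V - R) + charge"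
    using graph star_subset by (intro charged_weight_split) (auto simp: is_graph_def)
  ultimately have "2 * card (S \<union> {u}) + 1 \<le> charged_weight f D V"
    using bound charge_ge_2 by (auto split: if_splits)
  then show ?thesis using vertex_cover_insert_support[OF S] by (auto simp: cover_bound_def)
qed

end

lemma forest_cover_bound:
  assumes "is_graph V E" "\<not> has_cycle V E" "V \<noteq> {}" "OIDRD_except V E D f"
  shows "cover_bound V E D f"
  using assms
proof (induction "card V" arbitrary: V E D rule: less_induct)
  case less
  have IH: "cover_bound A (induced E A) D' f"
    if "A \<subset> V" "A \<noteq> {}" "OIDRD_except A (induced E A) D' f" for A D'
  proof (rule less.hyps)
    show "card A < card V"
      using less.prems(1) that(1) by (intro psubset_card_mono) (auto simp: is_graph_def)
    show "is_graph A (induced E A)" using less.prems(1) that(1) by (intro is_graph_induced) auto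
    show "\<not> has_cycle A (induced E A)"
      using less.prems(2) has_cycle_mono[of A "induced E A" V E] that(1) by (auto simp: induced_def)
  qed (use that in auto)
  from less.prems(1-3) show ?case
  proof (cases rule: forest_isolated_or_support_vertex)
    case (1 u)
    show ?thesis
    proof (cases "V = {u}")
      case True
      have "is_graph {u} E" "OIDRD_except {u} E D f" using less.prems(1,4) unfolding True .
      then show ?thesis unfolding True by (rule cover_bound_singleton) (rule 1(2))
    next
      case False
      have "OIDRD_except (V - {u}) (induced E (V - {u})) D f"
        by (rule OIDRD_except_remove_isolated[OF less.prems(1,4) 1(2)])
      then have "cover_bound (V - {u}) (induced E (V - {u})) D f"
        using False 1(1) by (intro IH) auto
      then show ?thesis by (rule cover_bound_remove_isolated[OF less.prems(1) 1(2)])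
    qed
  next
    case (2 u l p)
    then interpret support_vertex V E D f u l p using less.prems by unfold_locales
    show ?thesis
    proof (cases "V - R = {}")
      case True
      then show ?thesis by (rule cover_bound_if_rest_empty)
    next
      case False
      have "u \<in> R" by (simp add: leaf_star_def)
      then have "cover_bound (V - R) (induced E (V - R)) rest_exempt f"
        using False rest_OIDRD_except star_subset by (intro IH) auto
      then show ?thesis by (rule cover_bound_from_rest)
    qed
  qed
qed

lemma beta_le_card: "vertex_cover V E S \<Longrightarrow> beta V E \<le> card S"
  unfolding beta_def by (rule Least_le) blast

lemma gamma_oidR_attained:
  obtains f where "OIDRD V E f" "(\<Sum>v\<in>V. f v) = gamma_oidR V E"
proof -
  have "OIDRD V E (\<lambda>_. 3)" by (simp add: OIDRD_def DRD_def)
  then show ?thesis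
    using LeastI_ex[of "\<lambda>w. \<exists>f. OIDRD V E f \<and> (\<Sum>v\<in>V. f v) = w"] that
    unfolding gamma_oidR_def by blast
qed

lemma tree_gamma_oidR_ge: "is_tree V E \<Longrightarrow> 2 * beta V E + 1 \<le> gamma_oidR V E"
proof -
  assume "is_tree V E"
  then have forest: "is_graph V E" "\<not> has_cycle V E" "V \<noteq> {}" by (auto simp: is_tree_def)
  obtain f where f: "OIDRD V E f" "(\<Sum>v\<in>V. f v) = gamma_oidR V E"
    by (rule gamma_oidR_attained)
  obtain S where "vertex_cover V E S" "2 * card S + 1 \<le> charged_weight f {} V"
    using forest_cover_bound[OF forest OIDRD_imp_OIDRD_except[OF f(1)]]
    by (auto simp: cover_bound_def)
  then show ?thesis using beta_le_card[of V E S] f(2) by (simp add: charged_weight_def)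
qed

subsection \<open>Sharpness\<close>

definition K2 :: "nat \<Rightarrow> nat \<Rightarrow> bool" where
  "K2 a b \<longleftrightarrow> a \<noteq> b \<and> a \<le> 1 \<and> b \<le> 1"

lemma not_has_cycle_if_card_less_3: "finite V \<Longrightarrow> card V < 3 \<Longrightarrow> \<not> has_cycle V E"
  unfolding has_cycle_def by (metis card_mono distinct_card leD order_less_le_trans)

lemma is_tree_K2: "is_tree {0, 1} K2"
proof -
  have "K2\<^sup>*\<^sup>* a b" if "a \<in> {0, 1}" "b \<in> {0, 1}" for a b
    using that by (cases "a = b") (auto simp: K2_def)
  then show ?thesis
    using not_has_cycle_if_card_less_3[of "{0, 1 :: nat}" K2]
    by (auto simp: is_tree_def is_graph_def connected_graph_def K2_def)
qed

lemma beta_K2: "beta {0, 1} K2 = 1"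
  unfolding beta_def
proof (rule Least_equality)
  show "\<exists>S. vertex_cover {0, 1} K2 S \<and> card S = 1"
    by (rule exI[of _ "{0}"]) (auto simp: vertex_cover_def K2_def)
next
  fix k assume "\<exists>S. vertex_cover {0, 1} K2 S \<and> card S = k"
  then obtain S where "vertex_cover {0, 1} K2 S" "card S = k" by blast
  moreover have "K2 0 1" by (simp add: K2_def)
  ultimately have "S \<noteq> {}" "finite S"
    by (auto simp: vertex_cover_def intro: finite_subset)
  then have "0 < card S" by (simp add: card_gt_0_iff)
  then show "1 \<le> k" using \<open>card S = k\<close> by simp
qed

lemma gamma_oidR_K2_le: "gamma_oidR {0, 1} K2 \<le> 3"
proof -
  have "OIDRD {0, 1} K2 (\<lambda>x. if x = 0 then 0 else 3)"
    by (auto simp: OIDRD_def DRD_def K2_def)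
  then show ?thesis unfolding gamma_oidR_def by (intro Least_le) auto
qed

theorem theorem5:
  shows "(\<forall>(V :: 'a set) E. is_tree V E \<longrightarrow> gamma_oidR V E \<ge> 2 * beta V E + 1) \<and>
         (\<exists>(V :: nat set) E. is_tree V E \<and> gamma_oidR V E = 2 * beta V E + 1)"
proof
  show "\<forall>(V :: 'a set) E. is_tree V E \<longrightarrow> gamma_oidR V E \<ge> 2 * beta V E + 1"
    using tree_gamma_oidR_ge by blast
  have "gamma_oidR {0, 1} K2 = 2 * beta {0, 1} K2 + 1"
    using gamma_oidR_K2_le tree_gamma_oidR_ge[OF is_tree_K2] beta_K2 by linarith
  then show "\<exists>(V :: nat set) E. is_tree V E \<and> gamma_oidR V E = 2 * beta V E + 1"
    using is_tree_K2 by blast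
qed

end
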